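(* Let $K$ be a field, $n\ge1$, $R=K[x_1,\ldots,x_{2n+1}]$, and let $C_{2n+1}$ be the cycle graph with vertices $x_1,\ldots,x_{2n+1}$ and edges $\{x_i,x_{i+1}\}$ for $i=1,\ldots,2n$ and $\{x_{2n+1},x_1\}$. Then the edge ideal $I(C_{2n+1})=(x_1x_2,x_2x_3,\ldots,x_{2n}x_{2n+1},x_{2n+1}x_1)\subset R$ has the nearly copersistence property.
   Context: A monomial ideal $I\subset R$ has the nearly copersistence property if there exist a positive integer $s$ and a monomial prime ideal $\mathfrak{p}$ such that $\mathrm{Ass}_R(R/I^m)\cup\{\mathfrak{p}\}\supseteq\mathrm{Ass}_R(R/I^{m+1})$ for all $1\le m\le s$, and $\mathrm{Ass}_R(R/I^m)\supseteq\mathrm{Ass}_R(R/I^{m+1})$ for all $m\ge s+1$. *)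

theory Defs
  imports Main "HOL-Library.Poly_Mapping"
begin

text \<open>The ring R = K[x_1,...,x_N] is the subring of polynomials whose monomials only
  involve the variables 0,...,N-1 (variable x_(i+1) is index i).\<close>

type_synonym 'k mpoly = "(nat \<Rightarrow>\<^sub>0 nat) \<Rightarrow>\<^sub>0 'k"

definition polyring :: "nat \<Rightarrow> ('k::field) mpoly set" where
  "polyring N = {p::'k mpoly. \<forall>a\<in>Poly_Mapping.keys p. Poly_Mapping.keys a \<subseteq> {..<N}}"

definition var :: "nat \<Rightarrow> ('k::field) mpoly" where
  "var i = Poly_Mapping.single (Poly_Mapping.single i 1) 1"

definition is_monomial :: "nat \<Rightarrow> ('k::field) mpoly \<Rightarrow> bool" where
  "is_monomial N u \<longleftrightarrow> (\<exists>a. Poly_Mapping.keys a \<subseteq> {..<N} \<and> u = Poly_Mapping.single a 1)"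

definition is_ideal :: "'a::comm_ring_1 set \<Rightarrow> 'a set \<Rightarrow> bool" where
  "is_ideal R I \<longleftrightarrow> I \<subseteq> R \<and> 0 \<in> I \<and> (\<forall>a\<in>I. \<forall>b\<in>I. a + b \<in> I)
     \<and> (\<forall>r\<in>R. \<forall>a\<in>I. r * a \<in> I)"

definition ideal_gen :: "'a::comm_ring_1 set \<Rightarrow> 'a set \<Rightarrow> 'a set" where
  "ideal_gen R G = \<Inter>{I. is_ideal R I \<and> G \<subseteq> I}"

definition ideal_pow :: "'a::comm_ring_1 set \<Rightarrow> 'a set \<Rightarrow> nat \<Rightarrow> 'a set" where
  "ideal_pow R I m = ideal_gen R {prod_list xs | xs. length xs = m \<and> set xs \<subseteq> I}"

definition is_prime_ideal :: "'a::comm_ring_1 set \<Rightarrow> 'a set \<Rightarrow> bool" where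
  "is_prime_ideal R P \<longleftrightarrow> is_ideal R P \<and> P \<noteq> R
     \<and> (\<forall>a\<in>R. \<forall>b\<in>R. a * b \<in> P \<longrightarrow> a \<in> P \<or> b \<in> P)"

definition Ass :: "'a::comm_ring_1 set \<Rightarrow> 'a set \<Rightarrow> 'a set set" where
  "Ass R I = {P. is_prime_ideal R P \<and> (\<exists>f\<in>R. P = {g\<in>R. g * f \<in> I})}"

definition monomial_ideal :: "nat \<Rightarrow> ('k::field) mpoly set \<Rightarrow> bool" where
  "monomial_ideal N I \<longleftrightarrow> (\<exists>M. (\<forall>u\<in>M. is_monomial N u) \<and> I = ideal_gen (polyring N) M)"

definition monomial_prime :: "nat \<Rightarrow> ('k::field) mpoly set \<Rightarrow> bool" where
  "monomial_prime N P \<longleftrightarrow> monomial_ideal N P \<and> is_prime_ideal (polyring N) P"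

definition nearly_copersistent :: "nat \<Rightarrow> ('k::field) mpoly set \<Rightarrow> bool" where
  "nearly_copersistent N I \<longleftrightarrow>
     (\<exists>s::nat. s > 0 \<and> (\<exists>P. monomial_prime N P \<and>
        (\<forall>m. 1 \<le> m \<and> m \<le> s \<longrightarrow>
           Ass (polyring N) (ideal_pow (polyring N) I (m+1))
             \<subseteq> Ass (polyring N) (ideal_pow (polyring N) I m) \<union> {P}) \<and>
        (\<forall>m. m \<ge> s + 1 \<longrightarrow>
           Ass (polyring N) (ideal_pow (polyring N) I (m+1))
             \<subseteq> Ass (polyring N) (ideal_pow (polyring N) I m))))"

text \<open>Edge ideal of the odd cycle C_(2n+1) on x_1..x_(2n+1) (indices 0..2n):
  edges {i, i+1 mod (2n+1)}.\<close>
definition cycle_edge_ideal :: "nat \<Rightarrow> ('k::field) mpoly set" where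
  "cycle_edge_ideal n = ideal_gen (polyring (2*n+1))
     {var i * var ((i + 1) mod (2*n+1)) | i. i < 2*n+1}"

end

theory Submission
  imports Defs
begin

text \<open>Let \<open>I\<close> be the edge ideal of the cycle on \<open>N = 2 n + 1\<close> vertices. The monomials of
  \<open>I^k\<close> are those whose exponent vector dominates the degree vector of a multiset of \<open>k\<close>
  edges. A weighted Koenig theorem for the cycle (cut it open at a heavy vertex \<open>j\<close>; on the
  resulting path a greedy argument works) shows that this domination fails only on a light
  minimal vertex cover avoiding \<open>j\<close>. Consequently, if \<open>P = (I^k : f)\<close> is prime and misses
  some variable \<open>x_j\<close>, then the degree in the variables of a suitable minimal vertex cover
  \<open>C\<close> is a valuation separating \<open>P\<close>, and \<open>P\<close> is the prime generated by \<open>C\<close>; otherwise \<open>P\<close> is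
  the maximal ideal \<open>m\<close> of the variables. So every associated prime of \<open>I^k\<close> is a minimal
  prime or \<open>m\<close>. Conversely, every minimal prime is associated to every power, and \<open>m\<close> is
  associated to \<open>I^k\<close> for \<open>k \<ge> n + 1\<close>, witnessed by a monomial of degree \<open>2 k - 1\<close>: the
  odd cycle has \<open>n + 1\<close> edges covering one chosen vertex twice and every other vertex once.
  Hence the property holds with \<open>s = n\<close> and the exceptional prime \<open>m\<close>.\<close>

abbreviation lookup :: "('a \<Rightarrow>\<^sub>0 'b::zero) \<Rightarrow> 'a \<Rightarrow> 'b" where
  "lookup \<equiv> Poly_Mapping.lookup"

abbreviation keys :: "('a \<Rightarrow>\<^sub>0 'b::zero) \<Rightarrow> 'a set" where
  "keys \<equiv> Poly_Mapping.keys"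

abbreviation single :: "'a \<Rightarrow> 'b::zero \<Rightarrow> 'a \<Rightarrow>\<^sub>0 'b" where
  "single \<equiv> Poly_Mapping.single"

section \<open>Combinatorics of the cycle\<close>

text \<open>The cycle on the vertices \<open>0, \<dots>, N - 1\<close> has the edges \<open>{i, Suc i mod N}\<close>, \<open>i < N\<close>;
  a multiset of edges is a function \<open>z\<close> giving the multiplicity of each edge.\<close>

definition cyc_pred :: "nat \<Rightarrow> nat \<Rightarrow> nat" where
  "cyc_pred N v = (if v = 0 then N - 1 else v - 1)"

lemma cyc_pred_less: "v < N \<Longrightarrow> cyc_pred N v < N"
  unfolding cyc_pred_def by auto

lemma Suc_mod_eq_iff_cyc_pred: "i < N \<Longrightarrow> v < N \<Longrightarrow> v = Suc i mod N \<longleftrightarrow> i = cyc_pred N v"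
  unfolding cyc_pred_def by (cases "Suc i = N") auto

lemma cyc_pred_Suc_mod: "i < N \<Longrightarrow> cyc_pred N (Suc i mod N) = i"
  using Suc_mod_eq_iff_cyc_pred[of i N "Suc i mod N"] by simp

lemma Suc_mod_cyc_pred: "v < N \<Longrightarrow> Suc (cyc_pred N v) mod N = v"
  using Suc_mod_eq_iff_cyc_pred[of "cyc_pred N v" N v] cyc_pred_less by simp

lemma bij_betw_cyc_pred: "bij_betw (cyc_pred N) {..<N} {..<N}"
  by (rule bij_betw_byWitness[where f' = "\<lambda>i. Suc i mod N"])
    (auto simp: cyc_pred_Suc_mod Suc_mod_cyc_pred cyc_pred_less)

definition edge_deg :: "nat \<Rightarrow> (nat \<Rightarrow> nat) \<Rightarrow> nat \<Rightarrow> nat" where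
  "edge_deg N z v = (if v < N then z v + z (cyc_pred N v) else 0)"

lemma edge_deg_add: "edge_deg N (\<lambda>i. z1 i + z2 i) v = edge_deg N z1 v + edge_deg N z2 v"
  unfolding edge_deg_def by simp

lemma edge_deg_single_edge:
  assumes "i < N"
  shows "edge_deg N (\<lambda>t. if t = i then c else 0) v
    = (if v = i then c else 0) + (if v = Suc i mod N then c else 0)"
  using assms Suc_mod_eq_iff_cyc_pred[OF assms, of v]
  by (cases "v < N") (auto simp: edge_deg_def)

lemma sum_edge_deg: "(\<Sum>v<N. edge_deg N z v) = 2 * sum z {..<N}"
proof -
  have "(\<Sum>v<N. edge_deg N z v) = sum z {..<N} + (\<Sum>v<N. z (cyc_pred N v))"
    by (simp add: edge_deg_def sum.distrib)
  also have "(\<Sum>v<N. z (cyc_pred N v)) = sum z {..<N}"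
    using sum.reindex_bij_betw[OF bij_betw_cyc_pred] .
  finally show ?thesis by simp
qed

definition vertex_cover :: "nat \<Rightarrow> nat set \<Rightarrow> bool" where
  "vertex_cover N C \<longleftrightarrow> C \<subseteq> {..<N} \<and> (\<forall>i<N. i \<in> C \<or> Suc i mod N \<in> C)"

definition min_vertex_cover :: "nat \<Rightarrow> nat set \<Rightarrow> bool" where
  "min_vertex_cover N C \<longleftrightarrow> vertex_cover N C \<and> (\<forall>D\<subseteq>C. vertex_cover N D \<longrightarrow> D = C)"

lemma vertex_cover_finite: "vertex_cover N C \<Longrightarrow> finite C"
  unfolding vertex_cover_def using finite_subset by blast

lemma sum_le_sum_edge_deg_cover:
  assumes "vertex_cover N C"
  shows "sum z {..<N} \<le> (\<Sum>v\<in>C. edge_deg N z v)"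
proof -
  have C: "C \<subseteq> {..<N}" and fin: "finite C"
    using assms vertex_cover_finite unfolding vertex_cover_def by auto
  have "i \<in> C \<union> cyc_pred N ` C" if "i < N" for i
    using assms cyc_pred_Suc_mod[OF that] that unfolding vertex_cover_def by (metis UnI1 UnI2 imageI)
  then have "{..<N} \<subseteq> C \<union> cyc_pred N ` C" by blast
  then have "sum z {..<N} \<le> sum z (C \<union> cyc_pred N ` C)"
    using fin by (intro sum_mono2) auto
  also have "\<dots> \<le> sum z C + sum z (cyc_pred N ` C)"
    using fin by (simp add: sum_Un_nat)
  also have "sum z (cyc_pred N ` C) = (\<Sum>v\<in>C. z (cyc_pred N v))"
    using inj_on_subset[OF bij_betw_imp_inj_on[OF bij_betw_cyc_pred] C] by (simp add: sum.reindex)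
  also have "sum z C + \<dots> = (\<Sum>v\<in>C. edge_deg N z v)"
    using C by (simp add: sum.distrib[symmetric] edge_deg_def subset_eq)
  finally show ?thesis .
qed

lemma min_vertex_cover_exists:
  assumes "vertex_cover N C"
  shows "\<exists>D\<subseteq>C. min_vertex_cover N D"
proof -
  obtain D where D: "D \<subseteq> C" "vertex_cover N D"
    and least: "\<And>E. E \<subseteq> C \<Longrightarrow> vertex_cover N E \<Longrightarrow> card D \<le> card E"
    using ex_has_least_nat[of "\<lambda>D. D \<subseteq> C \<and> vertex_cover N D" C card] assms by blast
  have "E = D" if "E \<subseteq> D" "vertex_cover N E" for E
    using least[of E] that D card_seteq[OF vertex_cover_finite[OF D(2)]] by auto
  then have "min_vertex_cover N D"
    unfolding min_vertex_cover_def using D(2) by blast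
  then show ?thesis using D(1) by blast
qed

lemma min_vertex_cover_private_edge:
  assumes N: "2 \<le> N" and C: "min_vertex_cover N C" and c: "c \<in> C"
  shows "\<exists>i<N. \<exists>c'. c' \<notin> C \<and> (i, Suc i mod N) \<in> {(c, c'), (c', c)}"
proof -
  have cov: "vertex_cover N C" and CN: "C \<subseteq> {..<N}"
    using C unfolding min_vertex_cover_def vertex_cover_def by auto
  have "\<not> vertex_cover N (C - {c})"
    using C c unfolding min_vertex_cover_def by blast
  then obtain i where i: "i < N" "i \<notin> C - {c}" "Suc i mod N \<notin> C - {c}"
    using CN unfolding vertex_cover_def by auto
  moreover have "Suc i mod N \<noteq> i"
    using N i(1) by (cases "Suc i = N") auto
  moreover have "i \<in> C \<or> Suc i mod N \<in> C"
    using cov i(1) unfolding vertex_cover_def by auto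
  ultimately show ?thesis by blast
qed

text \<open>The exponent vectors of the monomials in the \<open>k\<close>-th power of the edge ideal.\<close>

definition edge_pow_exps :: "nat \<Rightarrow> nat \<Rightarrow> (nat \<Rightarrow>\<^sub>0 nat) set" where
  "edge_pow_exps N k = {a. \<exists>z. sum z {..<N} = k \<and> (\<forall>v<N. edge_deg N z v \<le> lookup a v)}"

lemma edge_pow_exps_mono:
  "a \<in> edge_pow_exps N k \<Longrightarrow> (\<And>v. v < N \<Longrightarrow> lookup a v \<le> lookup b v) \<Longrightarrow> b \<in> edge_pow_exps N k"
  unfolding edge_pow_exps_def by (auto intro: order_trans)

lemma edge_pow_exps_add:
  assumes "a \<in> edge_pow_exps N k1" "b \<in> edge_pow_exps N k2"
  shows "a + b \<in> edge_pow_exps N (k1 + k2)"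
proof -
  obtain z1 z2 where "sum z1 {..<N} = k1" "sum z2 {..<N} = k2"
    "\<forall>v<N. edge_deg N z1 v \<le> lookup a v" "\<forall>v<N. edge_deg N z2 v \<le> lookup b v"
    using assms unfolding edge_pow_exps_def by blast
  then show ?thesis
    unfolding edge_pow_exps_def
    by (intro CollectI exI[of _ "\<lambda>i. z1 i + z2 i"])
      (auto simp: sum.distrib edge_deg_add lookup_add intro: add_mono)
qed

lemma edge_pow_exps_0: "a \<in> edge_pow_exps N 0"
  unfolding edge_pow_exps_def by (intro CollectI exI[of _ "\<lambda>_. 0"]) (simp add: edge_deg_def)

lemma edge_pow_exps_cover_bound:
  assumes "vertex_cover N C" "a \<in> edge_pow_exps N k"
  shows "k \<le> sum (lookup a) C"
proof -
  obtain z where z: "sum z {..<N} = k" "\<forall>v<N. edge_deg N z v \<le> lookup a v"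
    using assms(2) unfolding edge_pow_exps_def by blast
  have "k \<le> (\<Sum>v\<in>C. edge_deg N z v)"
    using sum_le_sum_edge_deg_cover[OF assms(1), of z] z(1) by simp
  also have "\<dots> \<le> sum (lookup a) C"
    using assms(1) z(2) unfolding vertex_cover_def by (intro sum_mono) auto
  finally show ?thesis .
qed

lemma edge_pow_exps_degree_bound:
  assumes "a \<in> edge_pow_exps N k"
  shows "2 * k \<le> (\<Sum>v<N. lookup a v)"
proof -
  obtain z where z: "sum z {..<N} = k" "\<forall>v<N. edge_deg N z v \<le> lookup a v"
    using assms unfolding edge_pow_exps_def by blast
  have "2 * k = (\<Sum>v<N. edge_deg N z v)"
    using sum_edge_deg z(1) by simp
  also have "\<dots> \<le> (\<Sum>v<N. lookup a v)"
    using z(2) by (intro sum_mono) auto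
  finally show ?thesis .
qed

section \<open>Koenig's theorem for weighted paths and cycles\<close>

definition path_deg :: "nat \<Rightarrow> (nat \<Rightarrow> nat) \<Rightarrow> nat \<Rightarrow> nat" where
  "path_deg M y t = (if 0 < t then y (t - 1) else 0) + (if t < M then y t else 0)"

definition path_cover :: "nat \<Rightarrow> nat set \<Rightarrow> bool" where
  "path_cover M C \<longleftrightarrow> C \<subseteq> {..M} \<and> (\<forall>t<M. t \<in> C \<or> Suc t \<in> C)"

lemma konig_path_extend_packing:
  fixes w :: "nat \<Rightarrow> nat"
  assumes y: "sum y {..<M} = k - \<mu>" "\<forall>t\<le>M. path_deg M y t \<le> (w(M := w M - \<mu>)) t"
    and \<mu>: "\<mu> \<le> w M" "\<mu> \<le> w (Suc M)" "\<mu> \<le> k"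
  shows "sum (y(M := \<mu>)) {..<Suc M} = k \<and> (\<forall>t\<le>Suc M. path_deg (Suc M) (y(M := \<mu>)) t \<le> w t)"
proof (intro conjI allI impI)
  have "sum (y(M := \<mu>)) {..<M} = sum y {..<M}"
    by (intro sum.cong) auto
  then show "sum (y(M := \<mu>)) {..<Suc M} = k"
    using y(1) \<mu>(3) by simp
  fix t assume "t \<le> Suc M"
  then consider "t < M" | "t = M" | "t = Suc M" by linarith
  then show "path_deg (Suc M) (y(M := \<mu>)) t \<le> w t"
  proof cases
    case 1
    then show ?thesis using y(2)[rule_format, of t] by (auto simp: path_deg_def)
  next
    case 2
    then show ?thesis using y(2)[rule_format, of t] \<mu>(1) by (auto simp: path_deg_def)
  next
    case 3
    then show ?thesis using \<mu>(2) by (simp add: path_deg_def)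
  qed
qed

lemma konig_path_extend_cover:
  fixes w :: "nat \<Rightarrow> nat"
  assumes C: "path_cover M C" "sum (w(M := w M - \<mu>)) C < k - \<mu>"
    and \<mu>: "\<mu> = min (w (Suc M)) (min (w M) k)"
  shows "\<exists>C'. path_cover (Suc M) C' \<and> sum w C' < k"
proof -
  have fin: "finite C" and CM: "C \<subseteq> {..M}"
    using C(1) finite_subset unfolding path_cover_def by auto
  have "sum (w(M := w M - \<mu>)) (C - {M}) = sum w (C - {M})"
    by (intro sum.cong) auto
  moreover have "\<mu> \<le> w M" unfolding \<mu> by auto
  ultimately have shift: "sum w C = sum (w(M := w M - \<mu>)) C + (if M \<in> C then \<mu> else 0)"
    using fin by (cases "M \<in> C") (simp_all add: sum.remove)
  show ?thesis
  proof (cases "M \<in> C")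
    case True
    then show ?thesis
      using C shift unfolding path_cover_def by (intro exI[of _ C]) (auto simp: less_Suc_eq)
  next
    case False
    have "\<mu> < k" using C(2) by linarith
    then have "\<mu> = w (Suc M) \<or> \<mu> = w M" unfolding \<mu> by linarith
    moreover have "Suc M \<notin> C" using CM by auto
    ultimately obtain u where "u \<in> {M, Suc M}" "u \<notin> C" "sum w (insert u C) = \<mu> + sum w C"
      using False fin by auto
    then show ?thesis
      using C False shift unfolding path_cover_def by (intro exI[of _ "insert u C"]) (auto simp: less_Suc_eq)
  qed
qed

text \<open>Greedy induction on the length: the last edge is taken as often as the weights of its
  end points and \<open>k\<close> allow.\<close>

lemma konig_path:
  fixes w :: "nat \<Rightarrow> nat"
  shows "(\<exists>y. sum y {..<M} = k \<and> (\<forall>t\<le>M. path_deg M y t \<le> w t))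
    \<or> (\<exists>C. path_cover M C \<and> sum w C < k)"
proof (induction M arbitrary: w k)
  case 0
  show ?case
  proof (cases "k = 0")
    case True
    then show ?thesis by (intro disjI1 exI[of _ "\<lambda>_. 0"]) (simp add: path_deg_def)
  next
    case False
    then show ?thesis by (intro disjI2 exI[of _ "{}"]) (simp add: path_cover_def)
  qed
next
  case (Suc M)
  define \<mu> where "\<mu> = min (w (Suc M)) (min (w M) k)"
  have \<mu>: "\<mu> \<le> w M" "\<mu> \<le> w (Suc M)" "\<mu> \<le> k" unfolding \<mu>_def by auto
  from Suc.IH[of "k - \<mu>" "w(M := w M - \<mu>)"] show ?case
  proof (elim disjE exE conjE)
    fix y assume "sum y {..<M} = k - \<mu>" "\<forall>t\<le>M. path_deg M y t \<le> (w(M := w M - \<mu>)) t"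
    then show ?case using konig_path_extend_packing[OF _ _ \<mu>] by blast
  next
    fix C assume "path_cover M C" "sum (w(M := w M - \<mu>)) C < k - \<mu>"
    then show ?case using konig_path_extend_cover \<mu>_def by blast
  qed
qed

text \<open>Cutting the cycle at the vertex \<open>0\<close> gives a path whose two end vertices both stand
  for \<open>0\<close>; giving them weight \<open>k\<close> makes them irrelevant for light covers.\<close>

lemma konig_cycle_0:
  fixes w :: "nat \<Rightarrow> nat"
  assumes N: "2 \<le> N" and k: "k \<le> w 0"
  shows "(\<exists>z. sum z {..<N} = k \<and> (\<forall>v<N. edge_deg N z v \<le> w v))
    \<or> (\<exists>C. vertex_cover N C \<and> 0 \<notin> C \<and> sum w C < k)"
proof -
  define w' where "w' t = (if t = 0 \<or> t = N then k else w t)" for t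
  from konig_path[of N k w'] show ?thesis
  proof (elim disjE exE conjE)
    fix y assume y: "sum y {..<N} = k" "\<forall>t\<le>N. path_deg N y t \<le> w' t"
    have "edge_deg N y v \<le> w v" if v: "v < N" for v
    proof (cases "v = 0")
      case True
      have "y 0 + y (N - 1) = sum y {0, N - 1}" using N by simp
      also have "\<dots> \<le> sum y {..<N}" using N by (intro sum_mono2) auto
      also have "\<dots> = k" by (rule y(1))
      finally show ?thesis using True v k by (simp add: edge_deg_def cyc_pred_def)
    next
      case False
      then show ?thesis
        using y(2)[rule_format, of v] v by (simp add: edge_deg_def cyc_pred_def path_deg_def w'_def)
    qed
    then show ?thesis using y(1) by blast
  next
    fix C assume C: "path_cover N C" "sum w' C < k"
    have fin: "finite C" using C(1) finite_subset unfolding path_cover_def by auto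
    have ends: "0 \<notin> C" "N \<notin> C"
      using member_le_sum[OF _ _ fin, of _ w'] C(2) by (force simp: w'_def)+
    have "sum w' C = sum w C" using ends by (intro sum.cong) (auto simp: w'_def)
    moreover have "vertex_cover N C"
      unfolding vertex_cover_def
    proof (intro conjI allI impI)
      show "C \<subseteq> {..<N}" using C(1) ends unfolding path_cover_def by (auto simp: le_less)
      fix i assume "i < N"
      then show "i \<in> C \<or> Suc i mod N \<in> C"
        using C(1) ends unfolding path_cover_def by (cases "Suc i = N") auto
    qed
    ultimately show ?thesis using C(2) ends by auto
  qed
qed

definition rot :: "nat \<Rightarrow> nat \<Rightarrow> nat \<Rightarrow> nat" where
  "rot N r v = (v + r) mod N"

lemma rot_less: "0 < N \<Longrightarrow> rot N r v < N"
  unfolding rot_def by simp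

lemma rot_rot: "rot N r (rot N s v) = rot N (s + r) v"
  unfolding rot_def by (simp add: mod_add_left_eq add.assoc)

lemma rot_cancel: "r \<le> N \<Longrightarrow> v < N \<Longrightarrow> rot N (N - r) (rot N r v) = v"
  by (simp add: rot_rot) (simp add: rot_def)

lemma rot_cancel': "r \<le> N \<Longrightarrow> v < N \<Longrightarrow> rot N r (rot N (N - r) v) = v"
  by (simp add: rot_rot) (simp add: rot_def)

lemma bij_betw_rot: "r \<le> N \<Longrightarrow> bij_betw (rot N r) {..<N} {..<N}"
  by (rule bij_betw_byWitness[where f' = "rot N (N - r)"]) (auto simp: rot_cancel rot_cancel' rot_less)

lemma cyc_pred_rot:
  assumes v: "v < N"
  shows "cyc_pred N (rot N r v) = rot N r (cyc_pred N v)"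
proof -
  have pred: "cyc_pred N u = (u + (N - 1)) mod N" if "u < N" for u
    using that unfolding cyc_pred_def by (cases u) auto
  have "cyc_pred N (rot N r v) = (v + r + (N - 1)) mod N"
    using v rot_less[of N r v] by (simp only: pred rot_def mod_add_left_eq)
  also have "\<dots> = (v + (N - 1) + r) mod N"
    by (simp only: add_ac)
  also have "\<dots> = rot N r (cyc_pred N v)"
    using v by (simp only: pred rot_def mod_add_left_eq)
  finally show ?thesis .
qed

lemma Suc_mod_rot: "Suc (rot N r t) mod N = rot N r (Suc t mod N)"
  unfolding rot_def by (simp only: mod_Suc_eq mod_add_left_eq add_Suc)

lemma edge_deg_rot:
  assumes v: "v < N"
  shows "edge_deg N (\<lambda>i. z (rot N r i)) v = edge_deg N z (rot N r v)"
  using v rot_less[of N r v] by (simp add: edge_deg_def cyc_pred_rot[OF v])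

lemma vertex_cover_rot:
  assumes r: "r \<le> N" and C: "vertex_cover N C"
  shows "vertex_cover N (rot N r ` C)"
  unfolding vertex_cover_def
proof (intro conjI allI impI)
  show "rot N r ` C \<subseteq> {..<N}"
    using C rot_less[of N r] unfolding vertex_cover_def by auto
  fix i assume i: "i < N"
  define t where "t = rot N (N - r) i"
  have t: "t < N" "rot N r t = i"
    using i r rot_less[of N] rot_cancel' unfolding t_def by auto
  then have "t \<in> C \<or> Suc t mod N \<in> C"
    using C unfolding vertex_cover_def by blast
  moreover have "Suc i mod N = rot N r (Suc t mod N)"
    using t(2) Suc_mod_rot[of N r t] by simp
  ultimately show "i \<in> rot N r ` C \<or> Suc i mod N \<in> rot N r ` C"
    using t(2) by blast
qed

lemma konig_cycle:
  fixes w :: "nat \<Rightarrow> nat"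
  assumes N: "2 \<le> N" and j: "j < N" and k: "k \<le> w j"
  shows "(\<exists>z. sum z {..<N} = k \<and> (\<forall>v<N. edge_deg N z v \<le> w v))
    \<or> (\<exists>C. vertex_cover N C \<and> j \<notin> C \<and> sum w C < k)"
proof -
  define w' where "w' v = w (rot N j v)" for v
  have "k \<le> w' 0" using k j unfolding w'_def rot_def by simp
  from konig_cycle_0[of N k w', OF N this] show ?thesis
  proof (elim disjE exE conjE)
    fix z' assume z': "sum z' {..<N} = k" "\<forall>v<N. edge_deg N z' v \<le> w' v"
    define z where "z i = z' (rot N (N - j) i)" for i
    have "sum z {..<N} = k"
      using sum.reindex_bij_betw[OF bij_betw_rot[of "N - j" N], of z'] z'(1) unfolding z_def by simp
    moreover have "edge_deg N z v \<le> w v" if v: "v < N" for v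
    proof -
      have "edge_deg N z v = edge_deg N z' (rot N (N - j) v)"
        unfolding z_def by (rule edge_deg_rot[OF v])
      also have "\<dots> \<le> w' (rot N (N - j) v)"
        using z'(2) rot_less[of N "N - j" v] v by simp
      also have "\<dots> = w v"
        unfolding w'_def using rot_cancel'[of j N v] v j by simp
      finally show ?thesis .
    qed
    ultimately show ?thesis by blast
  next
    fix C' assume C': "vertex_cover N C'" "0 \<notin> C'" "sum w' C' < k"
    have "C' \<subseteq> {..<N}" using C'(1) unfolding vertex_cover_def by simp
    then have inj: "inj_on (rot N j) C'"
      using inj_on_subset[OF bij_betw_imp_inj_on[OF bij_betw_rot[of j N]]] j by simp
    have "j \<notin> rot N j ` C'"
    proof
      assume "j \<in> rot N j ` C'"
      then obtain v where "v \<in> C'" "rot N j v = j" by (metis imageE)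
      moreover have "v < N" using \<open>v \<in> C'\<close> C'(1) unfolding vertex_cover_def by auto
      ultimately have "v = rot N (N - j) j" using rot_cancel[of j N v] j by simp
      also have "\<dots> = 0" using j unfolding rot_def by simp
      finally show False using \<open>v \<in> C'\<close> C'(2) by simp
    qed
    moreover have "sum w (rot N j ` C') = sum w' C'"
      using inj unfolding w'_def by (simp add: sum.reindex)
    ultimately show ?thesis using vertex_cover_rot[of j N C'] C' j by auto
  qed
qed

lemma edge_pow_exps_if_heavy:
  assumes N: "2 \<le> N" and j: "j < N" and k: "k \<le> lookup c j"
    and covers: "\<And>C. min_vertex_cover N C \<Longrightarrow> j \<notin> C \<Longrightarrow> k \<le> sum (lookup c) C"
  shows "c \<in> edge_pow_exps N k"
  using konig_cycle[of N j k "lookup c", OF N j k]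
proof (elim disjE exE conjE)
  fix z assume "sum z {..<N} = k" "\<forall>v<N. edge_deg N z v \<le> lookup c v"
  then show ?thesis unfolding edge_pow_exps_def by blast
next
  fix C assume C: "vertex_cover N C" "j \<notin> C" "sum (lookup c) C < k"
  obtain D where D: "D \<subseteq> C" "min_vertex_cover N D"
    using min_vertex_cover_exists[OF C(1)] by blast
  have "sum (lookup c) D \<le> sum (lookup c) C"
    using D(1) vertex_cover_finite[OF C(1)] by (intro sum_mono2) auto
  moreover have "k \<le> sum (lookup c) D"
    using covers[OF D(2)] D(1) C(2) by blast
  ultimately show ?thesis using C(3) by linarith
qed

lemma single_in_polyring: "keys a \<subseteq> {..<N} \<Longrightarrow> single a c \<in> polyring N"
  unfolding polyring_def by auto

lemma zero_in_polyring: "0 \<in> polyring N"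
  unfolding polyring_def by simp

lemma one_in_polyring: "1 \<in> polyring N"
  unfolding polyring_def by simp

lemma polyring_add: "p \<in> polyring N \<Longrightarrow> q \<in> polyring N \<Longrightarrow> p + q \<in> polyring N"
  unfolding polyring_def using keys_add[of p q] by blast

lemma keys_add_nat: "keys ((a::'a \<Rightarrow>\<^sub>0 nat) + b) = keys a \<union> keys b"
  by (auto simp: in_keys_iff lookup_add)

lemma polyring_mult: "p \<in> polyring N \<Longrightarrow> q \<in> polyring N \<Longrightarrow> p * q \<in> polyring N"
  unfolding polyring_def using keys_mult[of p q] by (fastforce simp: keys_add_nat)

lemma polyring_uminus: "p \<in> polyring N \<Longrightarrow> - p \<in> polyring N"
  unfolding polyring_def by simp

lemma var_in_polyring: "i < N \<Longrightarrow> var i \<in> polyring N"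
  unfolding var_def by (rule single_in_polyring) simp

lemma polyring_power: "p \<in> polyring N \<Longrightarrow> p ^ k \<in> polyring N"
  by (induction k) (simp_all add: one_in_polyring polyring_mult)

lemma polyring_prod_list: "set xs \<subseteq> polyring N \<Longrightarrow> prod_list xs \<in> polyring N"
  by (induction xs) (simp_all add: one_in_polyring polyring_mult)

lemma is_ideal_polyring: "is_ideal (polyring N) (polyring N)"
  unfolding is_ideal_def by (simp add: zero_in_polyring polyring_add polyring_mult)

lemma var_power: "var i ^ k = single (single i k) 1"
  by (induction k) (simp_all add: var_def mult_single single_add[symmetric])

lemma prod_single_one:
  "finite A \<Longrightarrow> (\<Prod>i\<in>A. single (g i) (1::'k::comm_semiring_1)) = single (\<Sum>i\<in>A. g i) 1"
  by (induction A rule: finite_induct) (simp_all add: mult_single)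

lemma poly_mapping_sum_single: "p = (\<Sum>a\<in>keys p. single a (lookup p a))"
  by (rule poly_mapping_eqI) (simp add: lookup_sum lookup_single when_def sum.delta in_keys_iff)

lemma lookup_mult_single:
  fixes p :: "('a::cancel_comm_monoid_add \<Rightarrow>\<^sub>0 'b::semiring_1)"
  shows "lookup (p * single a 1) (b + a) = lookup p b"
proof -
  have "p * single a 1 = (\<Sum>x\<in>keys p. single (x + a) (lookup p x))"
    by (subst (1) poly_mapping_sum_single[of p]) (simp add: sum_distrib_right mult_single)
  then show ?thesis
    by (simp add: lookup_sum lookup_single when_def sum.delta in_keys_iff)
qed

lemma keys_mult_single:
  fixes p :: "('a::cancel_comm_monoid_add \<Rightarrow>\<^sub>0 'b::semiring_1)"
  shows "keys (p * single a 1) = (\<lambda>b. b + a) ` keys p"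
proof
  show "keys (p * single a 1) \<subseteq> (\<lambda>b. b + a) ` keys p"
    using keys_mult[of p "single a 1"] by auto
  show "(\<lambda>b. b + a) ` keys p \<subseteq> keys (p * single a 1)"
    using lookup_mult_single[of p a] by (auto simp: in_keys_iff)
qed

lemma is_ideal_ideal_gen:
  assumes "G \<subseteq> R" "is_ideal R R"
  shows "is_ideal R (ideal_gen R G)"
  unfolding is_ideal_def
proof (intro conjI ballI)
  have "R \<in> {I. is_ideal R I \<and> G \<subseteq> I}" using assms by simp
  then show "ideal_gen R G \<subseteq> R" unfolding ideal_gen_def by blast
  show "0 \<in> ideal_gen R G" unfolding ideal_gen_def is_ideal_def by blast
  fix a assume a: "a \<in> ideal_gen R G"
  show "a + b \<in> ideal_gen R G" if "b \<in> ideal_gen R G" for b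
    using a that unfolding ideal_gen_def is_ideal_def by blast
  show "r * a \<in> ideal_gen R G" if "r \<in> R" for r
    using a that unfolding ideal_gen_def is_ideal_def by blast
qed

lemma ideal_gen_superset: "G \<subseteq> ideal_gen R G"
  unfolding ideal_gen_def by blast

lemma ideal_gen_least: "is_ideal R J \<Longrightarrow> G \<subseteq> J \<Longrightarrow> ideal_gen R G \<subseteq> J"
  unfolding ideal_gen_def by blast

lemma ideal_subset: "is_ideal R J \<Longrightarrow> J \<subseteq> R"
  unfolding is_ideal_def by blast

lemma ideal_mult: "is_ideal R J \<Longrightarrow> r \<in> R \<Longrightarrow> a \<in> J \<Longrightarrow> r * a \<in> J"
  unfolding is_ideal_def by blast

lemma ideal_sum: "is_ideal R J \<Longrightarrow> (\<And>x. x \<in> A \<Longrightarrow> f x \<in> J) \<Longrightarrow> sum f A \<in> J"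
  unfolding is_ideal_def by (induction A rule: infinite_finite_induct) auto

lemma ideal_diff:
  assumes "is_ideal R J" "-1 \<in> R" "a \<in> J" "b \<in> J"
  shows "a - b \<in> J"
proof -
  have "a + (-1) * b \<in> J"
    using assms unfolding is_ideal_def by blast
  then show ?thesis by simp
qed

lemma prime_ideal_one_notin:
  assumes "is_prime_ideal R P"
  shows "1 \<notin> P"
proof
  assume one: "1 \<in> P"
  have P: "is_ideal R P" "P \<noteq> R"
    using assms unfolding is_prime_ideal_def by auto
  have "r \<in> P" if "r \<in> R" for r
    using ideal_mult[OF P(1) that one] by simp
  then show False
    using P ideal_subset[OF P(1)] by blast
qed

lemma prime_ideal_power:
  assumes P: "is_prime_ideal R P" and R: "is_ideal R R" and x: "x \<in> R"
  shows "x ^ Suc k \<in> P \<Longrightarrow> x \<in> P"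
proof (induction k)
  case (Suc k)
  have "x ^ Suc k \<in> R"
    by (induction k) (simp_all add: x ideal_mult[OF R x])
  moreover have "x * x ^ Suc k \<in> P"
    using Suc.prems by simp
  ultimately have "x \<in> P \<or> x ^ Suc k \<in> P"
    using P x unfolding is_prime_ideal_def by blast
  then show ?case using Suc.IH by blast
qed simp

lemma prime_ideal_prod_notin:
  assumes P: "is_prime_ideal R P" and R: "is_ideal R R" "1 \<in> R"
  shows "finite A \<Longrightarrow> (\<And>i. i \<in> A \<Longrightarrow> g i \<in> R \<and> g i \<notin> P) \<Longrightarrow> prod g A \<in> R \<and> prod g A \<notin> P"
proof (induction A rule: finite_induct)
  case empty
  then show ?case using prime_ideal_one_notin[OF P] R(2) by simp
next
  case (insert x A)
  then have "g x \<in> R" "g x \<notin> P" "prod g A \<in> R" "prod g A \<notin> P"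
    by auto
  then have "g x * prod g A \<in> R" "g x * prod g A \<notin> P"
    using P ideal_mult[OF R(1)] unfolding is_prime_ideal_def by blast+
  then show ?case using insert.hyps by simp
qed

lemma prime_colon_mult:
  assumes P: "is_prime_ideal R P" "P = {g \<in> R. g * f \<in> J}"
    and R: "is_ideal R R" and u: "u \<in> R" "u \<notin> P"
  shows "P = {g \<in> R. g * (f * u) \<in> J}"
proof (intro set_eqI iffI)
  have ideal: "is_ideal R P" using P(1) unfolding is_prime_ideal_def by blast
  fix g
  {
    assume g: "g \<in> P"
    then have "u * g \<in> P" "g \<in> R"
      using ideal_mult[OF ideal u(1)] ideal_subset[OF ideal] by auto
    then show "g \<in> {g \<in> R. g * (f * u) \<in> J}"
      using P(2) by (simp add: ac_simps)
  next
    assume g: "g \<in> {g \<in> R. g * (f * u) \<in> J}"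
    then have "g * u \<in> R"
      using ideal_mult[OF R u(1)] by (simp add: mult.commute)
    then have "g * u \<in> P"
      using g P(2) by (simp add: ac_simps)
    then show "g \<in> P"
      using P(1) u g unfolding is_prime_ideal_def by blast
  }
qed

definition monomial_span :: "nat \<Rightarrow> (nat \<Rightarrow>\<^sub>0 nat) set \<Rightarrow> 'k::field mpoly set" where
  "monomial_span N A = {p \<in> polyring N. keys p \<subseteq> A}"

lemma is_ideal_monomial_span:
  assumes up: "\<And>a b. a \<in> A \<Longrightarrow> b + a \<in> A"
  shows "is_ideal (polyring N) (monomial_span N A)"
  unfolding is_ideal_def
proof (intro conjI ballI)
  show "monomial_span N A \<subseteq> polyring N" "0 \<in> monomial_span N A"
    unfolding monomial_span_def by (auto simp: zero_in_polyring)
  fix p assume p: "p \<in> monomial_span N A"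
  show "p + q \<in> monomial_span N A" if "q \<in> monomial_span N A" for q
    using p that keys_add[of p q] unfolding monomial_span_def by (auto intro: polyring_add)
  show "r * p \<in> monomial_span N A" if r: "r \<in> polyring N" for r
  proof -
    have "keys (r * p) \<subseteq> A"
      using keys_mult[of r p] p up unfolding monomial_span_def by blast
    then show ?thesis
      using p r unfolding monomial_span_def by (simp add: polyring_mult)
  qed
qed

lemma monomial_span_subset:
  fixes J :: "'k::field mpoly set"
  assumes J: "is_ideal (polyring N) J"
    and mono: "\<And>a. a \<in> A \<Longrightarrow> keys a \<subseteq> {..<N} \<Longrightarrow> single a 1 \<in> J"
  shows "monomial_span N A \<subseteq> J"
proof
  fix p :: "'k mpoly" assume p: "p \<in> monomial_span N A"
  have "single a (lookup p a) \<in> J" if a: "a \<in> keys p" for a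
  proof -
    have "keys a \<subseteq> {..<N}" "a \<in> A"
      using p a unfolding monomial_span_def polyring_def by auto
    moreover have "single 0 (lookup p a) \<in> polyring N"
      by (rule single_in_polyring) simp
    ultimately have "single 0 (lookup p a) * single a 1 \<in> J"
      using mono ideal_mult[OF J] by blast
    then show ?thesis by (simp add: mult_single)
  qed
  then have "(\<Sum>a\<in>keys p. single a (lookup p a)) \<in> J"
    by (rule ideal_sum[OF J])
  then show "p \<in> J"
    using poly_mapping_sum_single[of p] by simp
qed

lemma colon_monomial_span:
  assumes "keys a \<subseteq> {..<N}"
  shows "{g \<in> polyring N. g * single a 1 \<in> monomial_span N A} = monomial_span N {b. b + a \<in> A}"
  using polyring_mult[OF _ single_in_polyring[OF assms]]
  unfolding monomial_span_def by (auto simp: keys_mult_single)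

section \<open>Valuations by the degree in a set of variables\<close>

definition deg_on :: "nat set \<Rightarrow> (nat \<Rightarrow>\<^sub>0 nat) \<Rightarrow> nat" where
  "deg_on C a = sum (lookup a) C"

definition min_deg_on :: "nat set \<Rightarrow> 'k::field mpoly \<Rightarrow> nat" where
  "min_deg_on C p = Min (deg_on C ` keys p)"

lemma deg_on_add: "deg_on C (a + b) = deg_on C a + deg_on C b"
  unfolding deg_on_def by (simp add: lookup_add sum.distrib)

lemma deg_on_eq_0_iff: "finite C \<Longrightarrow> deg_on C a = 0 \<longleftrightarrow> (\<forall>i\<in>C. lookup a i = 0)"
  unfolding deg_on_def by simp

lemma min_deg_on_le: "x \<in> keys p \<Longrightarrow> min_deg_on C p \<le> deg_on C x"
  unfolding min_deg_on_def by simp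

lemma min_deg_on_attained: "p \<noteq> 0 \<Longrightarrow> \<exists>x\<in>keys p. deg_on C x = min_deg_on C p"
  unfolding min_deg_on_def using Min_in[of "deg_on C ` keys p"] by fastforce

lemma deg_on_keys_mult:
  assumes "c \<in> keys (p * q)"
  shows "\<exists>x\<in>keys p. \<exists>y\<in>keys q. deg_on C c = deg_on C x + deg_on C y"
proof -
  obtain x y where "c = x + y" "x \<in> keys p" "y \<in> keys q"
    using assms keys_mult[of p q] by blast
  then show ?thesis by (auto simp: deg_on_add)
qed

lemma deg_on_keys_mult_less:
  assumes "c \<in> keys (p * q)" "\<forall>x\<in>keys p. m \<le> deg_on C x" "\<forall>y\<in>keys q. n < deg_on C y"
  shows "m + n < deg_on C c"
  using deg_on_keys_mult[OF assms(1), of C] assms(2,3) by fastforce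

definition restrict_keys :: "'k::field mpoly \<Rightarrow> (nat \<Rightarrow>\<^sub>0 nat) set \<Rightarrow> 'k mpoly" where
  "restrict_keys p A = (\<Sum>x\<in>keys p \<inter> A. single x (lookup p x))"

lemma lookup_restrict_keys: "lookup (restrict_keys p A) y = (if y \<in> A then lookup p y else 0)"
  unfolding restrict_keys_def by (simp add: lookup_sum lookup_single when_def sum.delta in_keys_iff)

lemma keys_restrict_keys: "keys (restrict_keys p A) = keys p \<inter> A"
  by (auto simp: in_keys_iff lookup_restrict_keys split: if_splits)

lemma restrict_keys_split: "p = restrict_keys p A + restrict_keys p (- A)"
  by (rule poly_mapping_eqI) (simp add: lookup_add lookup_restrict_keys)

definition low_part :: "nat set \<Rightarrow> 'k::field mpoly \<Rightarrow> 'k mpoly" where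
  "low_part C p = restrict_keys p {x. deg_on C x = min_deg_on C p}"

definition high_part :: "nat set \<Rightarrow> 'k::field mpoly \<Rightarrow> 'k mpoly" where
  "high_part C p = restrict_keys p {x. deg_on C x \<noteq> min_deg_on C p}"

lemma low_part_add_high_part: "p = low_part C p + high_part C p"
  unfolding low_part_def high_part_def using restrict_keys_split[of p "{x. deg_on C x = min_deg_on C p}"]
  by (simp add: Collect_neg_eq)

lemma deg_on_keys_low_part: "x \<in> keys (low_part C p) \<Longrightarrow> deg_on C x = min_deg_on C p"
  by (simp add: low_part_def keys_restrict_keys)

lemma deg_on_keys_high_part: "x \<in> keys (high_part C p) \<Longrightarrow> min_deg_on C p < deg_on C x"
  using min_deg_on_le[of x p C] by (simp add: high_part_def keys_restrict_keys)

lemma low_part_nonzero: "p \<noteq> 0 \<Longrightarrow> low_part C p \<noteq> 0"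
proof -
  assume "p \<noteq> 0"
  then obtain x where "x \<in> keys p" "deg_on C x = min_deg_on C p"
    using min_deg_on_attained by blast
  then have "x \<in> keys (low_part C p)" by (simp add: low_part_def keys_restrict_keys)
  then show ?thesis by auto
qed

text \<open>\<open>min_deg_on C\<close> is a valuation: the product of the lowest parts of two polynomials is
  non-zero and cannot cancel against the other products.\<close>

lemma min_deg_on_mult_attained:
  fixes a b :: "'k::field mpoly"
  assumes "a \<noteq> 0" "b \<noteq> 0"
  shows "\<exists>c\<in>keys (a * b). deg_on C c = min_deg_on C a + min_deg_on C b"
proof -
  let ?low = "low_part C" and ?high = "high_part C"
  have "?low a * ?low b \<noteq> 0"
    using low_part_nonzero[OF assms(1)] low_part_nonzero[OF assms(2)] by simp
  then obtain c where c: "c \<in> keys (?low a * ?low b)"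
    by (metis ex_in_conv keys_eq_empty)
  moreover obtain x y where "x \<in> keys (?low a)" "y \<in> keys (?low b)" "deg_on C c = deg_on C x + deg_on C y"
    using deg_on_keys_mult[OF c, of C] by blast
  ultimately have deg_c: "deg_on C c = min_deg_on C a + min_deg_on C b"
    using deg_on_keys_low_part[of x C a] deg_on_keys_low_part[of y C b] by simp
  define rest where "rest = ?low a * ?high b + ?low b * ?high a + ?high a * ?high b"
  have low_ge: "\<forall>x\<in>keys (?low p). min_deg_on C p \<le> deg_on C x" for p
    using deg_on_keys_low_part by (metis order_refl)
  have high_gt: "\<forall>x\<in>keys (?high p). min_deg_on C p < deg_on C x" for p
    using deg_on_keys_high_part by blast
  have "deg_on C d > min_deg_on C a + min_deg_on C b" if "d \<in> keys rest" for d
  proof -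
    have "d \<in> keys (?low a * ?high b) \<or> d \<in> keys (?low b * ?high a) \<or> d \<in> keys (?high a * ?high b)"
      using that keys_add[of "?low a * ?high b + ?low b * ?high a" "?high a * ?high b"]
        keys_add[of "?low a * ?high b" "?low b * ?high a"]
      unfolding rest_def by blast
    then show ?thesis
    proof (elim disjE)
      assume "d \<in> keys (?low a * ?high b)"
      from deg_on_keys_mult_less[OF this low_ge high_gt] show ?thesis .
    next
      assume "d \<in> keys (?low b * ?high a)"
      from deg_on_keys_mult_less[OF this low_ge high_gt] show ?thesis by simp
    next
      assume "d \<in> keys (?high a * ?high b)"
      from deg_on_keys_mult_less[OF this _ high_gt] show ?thesis using high_gt less_imp_le by blast
    qed
  qed
  then have "c \<notin> keys rest" using deg_c by (metis less_irrefl)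
  have "a * b = ?low a * ?low b + rest"
    by (subst low_part_add_high_part[of a C], subst low_part_add_high_part[of b C])
      (simp add: rest_def algebra_simps)
  then have "lookup (a * b) c = lookup (?low a * ?low b) c"
    using \<open>c \<notin> keys rest\<close> by (simp add: lookup_add in_keys_iff)
  then show ?thesis using c deg_c by (auto simp: in_keys_iff)
qed

definition vars_ideal :: "nat \<Rightarrow> nat set \<Rightarrow> 'k::field mpoly set" where
  "vars_ideal N C = monomial_span N {a. \<exists>i\<in>C. 0 < lookup a i}"

lemma is_ideal_vars_ideal: "is_ideal (polyring N) (vars_ideal N C)"
  unfolding vars_ideal_def by (rule is_ideal_monomial_span) (auto simp: lookup_add)

lemma notin_vars_ideal:
  assumes "finite C" "p \<in> polyring N" "p \<notin> vars_ideal N C"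
  shows "p \<noteq> 0 \<and> min_deg_on C p = 0"
proof -
  obtain x where x: "x \<in> keys p" "\<not> (\<exists>i\<in>C. 0 < lookup x i)"
    using assms(2,3) unfolding vars_ideal_def monomial_span_def by blast
  then have "deg_on C x = 0" using deg_on_eq_0_iff[OF assms(1)] by auto
  then show ?thesis
    using min_deg_on_le[OF x(1), of C] x(1) by auto
qed

lemma prime_vars_ideal:
  assumes C: "finite C"
  shows "is_prime_ideal (polyring N) (vars_ideal N C)"
  unfolding is_prime_ideal_def
proof (intro conjI ballI impI)
  show "is_ideal (polyring N) (vars_ideal N C)" by (rule is_ideal_vars_ideal)
  have "1 \<notin> vars_ideal N C"
    unfolding vars_ideal_def monomial_span_def by simp
  then show "vars_ideal N C \<noteq> polyring N"
    using one_in_polyring by blast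
  fix a b :: "'a mpoly"
  assume a: "a \<in> polyring N" and b: "b \<in> polyring N" and ab: "a * b \<in> vars_ideal N C"
  show "a \<in> vars_ideal N C \<or> b \<in> vars_ideal N C"
  proof (rule ccontr)
    assume "\<not> ?thesis"
    then have "a \<noteq> 0" "b \<noteq> 0" "min_deg_on C a = 0" "min_deg_on C b = 0"
      using notin_vars_ideal[OF C] a b by blast+
    then obtain c where "c \<in> keys (a * b)" "deg_on C c = 0"
      using min_deg_on_mult_attained[of a b C] by auto
    then show False
      using ab deg_on_eq_0_iff[OF C] unfolding vars_ideal_def monomial_span_def by auto
  qed
qed

lemma var_in_vars_ideal:
  assumes "i \<in> C" "i < N"
  shows "var i \<in> vars_ideal N C"
proof -
  have "single i (1::nat) \<in> {a. \<exists>j\<in>C. 0 < lookup a j}"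
    using assms(1) by (intro CollectI bexI[of _ i]) simp_all
  then show ?thesis
    unfolding vars_ideal_def monomial_span_def var_def
    using single_in_polyring[of "single i 1" N] assms(2) by simp
qed

lemma vars_ideal_subset:
  fixes J :: "'k::field mpoly set"
  assumes J: "is_ideal (polyring N) J" and vars: "\<And>i. i \<in> C \<Longrightarrow> var i \<in> J"
  shows "vars_ideal N C \<subseteq> J"
  unfolding vars_ideal_def
proof (rule monomial_span_subset[OF J])
  fix a :: "nat \<Rightarrow>\<^sub>0 nat" assume "a \<in> {a. \<exists>i\<in>C. 0 < lookup a i}" and a: "keys a \<subseteq> {..<N}"
  then obtain i where i: "i \<in> C" "0 < lookup a i" by blast
  have "a = (a - single i 1) + single i 1"
    using i(2) by (intro poly_mapping_eqI) (auto simp: lookup_add lookup_minus lookup_single when_def)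
  then have "single a 1 = single (a - single i 1) 1 * var i"
    unfolding var_def by (simp add: mult_single)
  moreover have "keys (a - single i 1) \<subseteq> {..<N}"
    using a by (rule order_trans[rotated]) (auto simp: in_keys_iff lookup_minus)
  ultimately show "single a 1 \<in> J"
    using ideal_mult[OF J single_in_polyring vars[OF i(1)]] by metis
qed

lemma vars_ideal_eq_ideal_gen:
  assumes "C \<subseteq> {..<N}"
  shows "vars_ideal N C = ideal_gen (polyring N) (var ` C)"
proof
  have gens: "var ` C \<subseteq> polyring N"
    using assms var_in_polyring by auto
  show "vars_ideal N C \<subseteq> ideal_gen (polyring N) (var ` C)"
    using subsetD[OF ideal_gen_superset[of "var ` C" "polyring N"]]
    by (intro vars_ideal_subset[OF is_ideal_ideal_gen[OF gens is_ideal_polyring]]) blast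
  show "ideal_gen (polyring N) (var ` C) \<subseteq> vars_ideal N C"
    using assms var_in_vars_ideal by (intro ideal_gen_least[OF is_ideal_vars_ideal]) auto
qed

lemma monomial_prime_vars_ideal:
  assumes C: "C \<subseteq> {..<N}"
  shows "monomial_prime N (vars_ideal N C)"
proof -
  have "\<forall>u\<in>var ` C. is_monomial N u"
    unfolding is_monomial_def var_def using C by (auto intro!: exI[of _ "single _ 1"])
  then show ?thesis
    unfolding monomial_prime_def monomial_ideal_def
    using vars_ideal_eq_ideal_gen[OF C] prime_vars_ideal finite_subset[OF C] by blast
qed

lemma notin_vars_ideal_all:
  assumes hR: "h \<in> polyring N" and nh: "h \<notin> vars_ideal N {..<N}"
  shows "lookup h 0 \<noteq> 0 \<and> h - single 0 (lookup h 0) \<in> vars_ideal N {..<N}"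
proof
  have monomial_0: "x = 0" if "x \<in> keys h" "\<forall>i<N. lookup x i = 0" for x
  proof -
    have "keys x \<subseteq> {..<N}" using that(1) hR unfolding polyring_def by blast
    then have "k \<notin> keys x" for k
      using that(2) by (cases "k < N") (auto simp: in_keys_iff)
    then show ?thesis using keys_eq_empty by blast
  qed
  obtain x where x: "x \<in> keys h" "\<not> (\<exists>i\<in>{..<N}. 0 < lookup x i)"
    using nh hR unfolding vars_ideal_def monomial_span_def by blast
  then have "\<forall>i<N. lookup x i = 0" by auto
  then show "lookup h 0 \<noteq> 0" using monomial_0[OF x(1)] x(1) by (simp add: in_keys_iff)
  define c where "c = lookup h 0"
  have lookup_h': "lookup (h - single 0 c) y = (if y = 0 then 0 else lookup h y)" for y
    by (simp add: lookup_minus lookup_single when_def c_def)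
  show "h - single 0 (lookup h 0) \<in> vars_ideal N {..<N}"
    unfolding vars_ideal_def monomial_span_def c_def[symmetric]
  proof (intro CollectI conjI subsetI)
    show "h - single 0 c \<in> polyring N"
      using polyring_add[OF hR polyring_uminus[OF single_in_polyring[of 0 N c]]] by simp
    fix y assume "y \<in> keys (h - single 0 c)"
    then have "y \<in> keys h" "y \<noteq> 0"
      by (simp_all add: in_keys_iff lookup_h' split: if_splits)
    then have "\<not> (\<forall>i<N. lookup y i = 0)"
      using monomial_0 by blast
    then show "\<exists>i\<in>{..<N}. 0 < lookup y i" by auto
  qed
qed

text \<open>The ideal of all variables is maximal: a polynomial outside of it has a non-zero
  constant term, which is a unit.\<close>

lemma prime_ideal_eq_vars_ideal_all:
  assumes P: "is_prime_ideal (polyring N) P" and vars: "\<And>i. i < N \<Longrightarrow> var i \<in> P"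
  shows "P = vars_ideal N {..<N}"
proof
  have ideal: "is_ideal (polyring N) P" using P unfolding is_prime_ideal_def by blast
  show all_vars: "vars_ideal N {..<N} \<subseteq> P"
    by (rule vars_ideal_subset[OF ideal]) (use vars in auto)
  show "P \<subseteq> vars_ideal N {..<N}"
  proof
    fix h assume h: "h \<in> P"
    show "h \<in> vars_ideal N {..<N}"
    proof (rule ccontr)
      assume "h \<notin> vars_ideal N {..<N}"
      moreover have hR: "h \<in> polyring N" using h ideal_subset[OF ideal] by blast
      ultimately have c: "lookup h 0 \<noteq> 0" "h - single 0 (lookup h 0) \<in> P"
        using notin_vars_ideal_all all_vars by blast+
      then have "h - (h - single 0 (lookup h 0)) \<in> P"
        using ideal_diff[OF ideal polyring_uminus[OF one_in_polyring] h] by blast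
      then have "single 0 (1 / lookup h 0) * single 0 (lookup h 0) \<in> P"
        using ideal_mult[OF ideal single_in_polyring[of 0 N "1 / lookup h 0"]] by simp
      then have "1 \<in> P" using c(1) by (simp add: mult_single)
      then show False using prime_ideal_one_notin[OF P] by blast
    qed
  qed
qed

lemma vars_ideal_in_Ass:
  assumes C: "finite C" and a: "keys a \<subseteq> {..<N}"
    and colon: "\<And>b. b + a \<in> A \<longleftrightarrow> (\<exists>i\<in>C. 0 < lookup b i)"
  shows "vars_ideal N C \<in> Ass (polyring N) (monomial_span N A)"
  unfolding Ass_def
proof (intro CollectI conjI bexI)
  show "is_prime_ideal (polyring N) (vars_ideal N C)" by (rule prime_vars_ideal[OF C])
  show "single a 1 \<in> polyring N" by (rule single_in_polyring[OF a])
  have "{b. b + a \<in> A} = {b. \<exists>i\<in>C. 0 < lookup b i}"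
    using colon by blast
  then show "vars_ideal N C = {g \<in> polyring N. g * single a 1 \<in> monomial_span N A}"
    unfolding colon_monomial_span[OF a] vars_ideal_def by simp
qed

section \<open>Powers of the edge ideal of the cycle\<close>

abbreviation edge_pow_ideal :: "nat \<Rightarrow> nat \<Rightarrow> 'k::field mpoly set" where
  "edge_pow_ideal N k \<equiv> monomial_span N (edge_pow_exps N k)"

definition cycle_edges :: "nat \<Rightarrow> 'k::field mpoly set" where
  "cycle_edges N = {var i * var (Suc i mod N) | i. i < N}"

definition edge_exp :: "nat \<Rightarrow> (nat \<Rightarrow> nat) \<Rightarrow> (nat \<Rightarrow>\<^sub>0 nat)" where
  "edge_exp N z = (\<Sum>i<N. single i (z i) + single (Suc i mod N) (z i))"

lemma lookup_edge_exp: "lookup (edge_exp N z) v = edge_deg N z v"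
proof -
  have "lookup (edge_exp N z) v
      = (\<Sum>i<N. if i = v then z i else 0) + (\<Sum>i<N. if Suc i mod N = v then z i else 0)"
    unfolding edge_exp_def by (simp add: lookup_sum lookup_add lookup_single when_def sum.distrib)
  also have "\<dots> = edge_deg N z v"
  proof (cases "v < N")
    case True
    have "(\<Sum>i<N. if Suc i mod N = v then z i else 0) = (\<Sum>i<N. if i = cyc_pred N v then z i else 0)"
      by (intro sum.cong refl) (metis Suc_mod_eq_iff_cyc_pred True lessThan_iff)
    then show ?thesis
      using True cyc_pred_less[OF True] by (simp add: edge_deg_def)
  next
    case False
    then have "Suc i mod N \<noteq> v" if "i < N" for i
      using that by (metis le_less_trans mod_less_divisor not_le zero_less_Suc less_zeroE neq0_conv)
    then show ?thesis using False by (simp add: edge_deg_def)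
  qed
  finally show ?thesis .
qed

lemma is_ideal_edge_pow: "is_ideal (polyring N) (edge_pow_ideal N k)"
  by (rule is_ideal_monomial_span) (auto elim: edge_pow_exps_mono simp: lookup_add)

lemma edge_pow_mult:
  assumes "p \<in> edge_pow_ideal N k1" "q \<in> edge_pow_ideal N k2"
  shows "p * q \<in> edge_pow_ideal N (k1 + k2)"
proof -
  have "c \<in> edge_pow_exps N (k1 + k2)" if c: "c \<in> keys (p * q)" for c
  proof -
    obtain x y where "c = x + y" "x \<in> keys p" "y \<in> keys q"
      using c keys_mult[of p q] by blast
    then show ?thesis
      using assms edge_pow_exps_add unfolding monomial_span_def by blast
  qed
  then show ?thesis
    using assms unfolding monomial_span_def by (auto intro: polyring_mult)
qed

lemma prod_list_in_edge_pow:
  "set xs \<subseteq> edge_pow_ideal N 1 \<Longrightarrow>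
    prod_list xs \<in> edge_pow_ideal N (length xs)"
proof (induction xs)
  case Nil
  then show ?case
    unfolding monomial_span_def by (simp add: one_in_polyring edge_pow_exps_0)
next
  case (Cons x xs)
  then show ?case using edge_pow_mult[of x N 1 "prod_list xs" "length xs"] by simp
qed

lemma var_mult_var: "var i * var j = single (single i 1 + single j 1) 1"
  unfolding var_def by (simp add: mult_single)

lemma cycle_edges_subset_edge_pow: "cycle_edges N \<subseteq> edge_pow_ideal N 1"
proof
  fix e assume "e \<in> cycle_edges N"
  then obtain i where i: "i < N" and e: "e = var i * var (Suc i mod N)"
    unfolding cycle_edges_def by blast
  have "e \<in> polyring N"
    using i e by (simp add: polyring_mult var_in_polyring)
  moreover have "single i 1 + single (Suc i mod N) 1 \<in> edge_pow_exps N 1"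
    unfolding edge_pow_exps_def
    using i by (intro CollectI exI[of _ "\<lambda>t. if t = i then 1 else 0"])
      (simp add: sum.delta edge_deg_single_edge lookup_add lookup_single when_def)
  ultimately show "e \<in> edge_pow_ideal N 1"
    unfolding monomial_span_def e var_mult_var by simp
qed

lemma edge_monomial_as_prod_list:
  "sum z {..<N} = k \<Longrightarrow> \<exists>xs. length xs = k \<and> set xs \<subseteq> (cycle_edges N :: 'k::field mpoly set)
    \<and> prod_list xs = single (edge_exp N z) 1"
proof (induction k arbitrary: z)
  case 0
  then have "edge_exp N z = 0" unfolding edge_exp_def by simp
  then show ?case by (intro exI[of _ "[]"]) simp
next
  case (Suc k)
  obtain i where i: "i < N" "0 < z i"
    using Suc.prems by (metis lessThan_iff neq0_conv sum.neutral nat.simps(3))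
  define z' where "z' = z(i := z i - 1)"
  have "sum z' {..<N} + 1 = sum z {..<N}"
    using i by (simp add: z'_def sum.remove sum.cong[of "{..<N} - {i}" _ z' z])
  then have "sum z' {..<N} = k" using Suc.prems by simp
  then obtain xs :: "'k mpoly list"
    where xs: "length xs = k" "set xs \<subseteq> cycle_edges N" "prod_list xs = single (edge_exp N z') 1"
    using Suc.IH by blast
  have "edge_exp N z = single i 1 + single (Suc i mod N) 1 + edge_exp N z'"
  proof (rule poly_mapping_eqI)
    fix v
    have "z = (\<lambda>t. z' t + (if t = i then 1 else 0))" using i unfolding z'_def by auto
    then have "edge_deg N z v = edge_deg N z' v + edge_deg N (\<lambda>t. if t = i then 1 else 0) v"
      by (simp add: edge_deg_add[symmetric])
    then show "lookup (edge_exp N z) v = lookup (single i 1 + single (Suc i mod N) 1 + edge_exp N z') v"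
      using i by (simp add: lookup_edge_exp edge_deg_single_edge lookup_add lookup_single when_def)
  qed
  then have "prod_list ((var i * var (Suc i mod N)) # xs) = single (edge_exp N z) 1"
    using xs(3) by (simp add: var_mult_var mult_single)
  moreover have "var i * var (Suc i mod N) \<in> cycle_edges N"
    unfolding cycle_edges_def using i by blast
  ultimately show ?case using xs by (intro exI[of _ "(var i * var (Suc i mod N)) # xs"]) auto
qed

theorem ideal_pow_cycle_edges:
  "ideal_pow (polyring N) (ideal_gen (polyring N) (cycle_edges N)) k
    = (edge_pow_ideal N k :: 'k::field mpoly set)"
  (is "ideal_pow ?R ?I k = _")
proof
  have gens_R: "cycle_edges N \<subseteq> ?R"
    using cycle_edges_subset_edge_pow unfolding monomial_span_def by blast
  have I_E1: "?I \<subseteq> edge_pow_ideal N 1"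
    by (rule ideal_gen_least[OF is_ideal_edge_pow cycle_edges_subset_edge_pow])
  show "ideal_pow ?R ?I k \<subseteq> edge_pow_ideal N k"
    unfolding ideal_pow_def
    using I_E1 prod_list_in_edge_pow by (intro ideal_gen_least[OF is_ideal_edge_pow]) fastforce
  let ?G = "{prod_list xs |xs. length xs = k \<and> set xs \<subseteq> ?I}"
  have J: "is_ideal ?R (ideal_pow ?R ?I k)"
    unfolding ideal_pow_def
  proof (rule is_ideal_ideal_gen[OF _ is_ideal_polyring])
    have "?I \<subseteq> ?R" by (rule ideal_gen_least[OF is_ideal_polyring gens_R])
    then show "?G \<subseteq> ?R" using polyring_prod_list by fastforce
  qed
  show "edge_pow_ideal N k \<subseteq> ideal_pow ?R ?I k"
  proof (rule monomial_span_subset[OF J])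
    fix a assume a: "a \<in> edge_pow_exps N k" "keys a \<subseteq> {..<N}"
    then obtain z where z: "sum z {..<N} = k" "\<forall>v<N. edge_deg N z v \<le> lookup a v"
      unfolding edge_pow_exps_def by blast
    obtain xs :: "'k mpoly list"
      where xs: "length xs = k" "set xs \<subseteq> cycle_edges N" "prod_list xs = single (edge_exp N z) 1"
      using edge_monomial_as_prod_list[OF z(1)] by blast
    have "set xs \<subseteq> ?I" using xs(2) ideal_gen_superset by blast
    then have "prod_list xs \<in> ideal_pow ?R ?I k"
      unfolding ideal_pow_def using xs(1) by (intro subsetD[OF ideal_gen_superset]) blast
    moreover have "a = (a - edge_exp N z) + edge_exp N z"
      using z(2) by (intro poly_mapping_eqI)
        (auto simp: lookup_add lookup_minus lookup_edge_exp edge_deg_def)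
    then have "single a 1 = single (a - edge_exp N z) 1 * prod_list xs"
      using xs(3) by (simp add: mult_single)
    moreover have "keys (a - edge_exp N z) \<subseteq> {..<N}"
      using a(2) by (rule order_trans[rotated]) (auto simp: in_keys_iff lookup_minus)
    ultimately show "single a 1 \<in> ideal_pow ?R ?I k"
      using ideal_mult[OF J single_in_polyring] by metis
  qed
qed

section \<open>The associated primes of the powers\<close>

lemma colon_edge_pow_subset_vars_ideal:
  assumes C: "vertex_cover N C" and c0: "c0 \<in> keys F" "deg_on C c0 < k"
  shows "{h \<in> polyring N. h * F \<in> edge_pow_ideal N k} \<subseteq> vars_ideal N C"
proof
  fix h assume h: "h \<in> {h \<in> polyring N. h * F \<in> edge_pow_ideal N k}"
  show "h \<in> vars_ideal N C"
  proof (rule ccontr)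
    assume "h \<notin> vars_ideal N C"
    then have "h \<noteq> 0" "min_deg_on C h = 0"
      using notin_vars_ideal[OF vertex_cover_finite[OF C]] h by auto
    moreover have "F \<noteq> 0" using c0(1) by auto
    ultimately obtain c where c: "c \<in> keys (h * F)" "deg_on C c = min_deg_on C F"
      using min_deg_on_mult_attained[of h F C] by auto
    then have "deg_on C c < k" using min_deg_on_le[OF c0(1), of C] c0(2) by simp
    moreover have "c \<in> edge_pow_exps N k"
      using h c(1) unfolding monomial_span_def by blast
    ultimately show False
      using edge_pow_exps_cover_bound[OF C] unfolding deg_on_def by fastforce
  qed
qed

text \<open>Koenig's theorem on the cycle, monomial by monomial: the factor makes every minimal
  vertex cover that meets \<open>A\<close> heavy.\<close>

lemma mult_powers_in_edge_pow_ideal: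
  fixes F :: "'k::field mpoly"
  assumes N: "2 \<le> N" and F: "F \<in> polyring N" and A: "A \<subseteq> {..<N}"
    and j: "j < N" "\<And>c. c \<in> keys F \<Longrightarrow> k \<le> lookup c j"
    and heavy: "\<And>C c. min_vertex_cover N C \<Longrightarrow> c \<in> keys F \<Longrightarrow> (\<exists>i\<in>C. i \<in> A) \<or> k \<le> deg_on C c"
  shows "single (\<Sum>i\<in>A. single i k) 1 * F \<in> edge_pow_ideal N k"
  unfolding monomial_span_def
proof (intro CollectI conjI subsetI)
  define d where "d = (\<Sum>i\<in>A. single i k)"
  have lookup_d: "lookup d i = (if i \<in> A then k else 0)" for i
    unfolding d_def using finite_subset[OF A] by (simp add: lookup_sum lookup_single when_def sum.delta)
  have "keys d \<subseteq> {..<N}" using A by (auto simp: in_keys_iff lookup_d split: if_splits)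
  then show "single d 1 * F \<in> polyring N" by (intro polyring_mult[OF single_in_polyring F])
  fix c' assume "c' \<in> keys (single d 1 * F)"
  then obtain c where c: "c \<in> keys F" "c' = c + d"
    by (auto simp: mult.commute[of "single d 1"] keys_mult_single)
  show "c' \<in> edge_pow_exps N k"
    unfolding c(2)
  proof (rule edge_pow_exps_if_heavy[OF N j(1)])
    show "k \<le> lookup (c + d) j" using j(2)[OF c(1)] by (simp add: lookup_add)
    fix C assume C: "min_vertex_cover N C" "j \<notin> C"
    have finC: "finite C"
      using C(1) vertex_cover_finite unfolding min_vertex_cover_def by blast
    from heavy[OF C(1) c(1)] show "k \<le> sum (lookup (c + d)) C"
    proof
      assume "\<exists>i\<in>C. i \<in> A"
      then obtain i where i: "i \<in> C" "i \<in> A" by blast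
      then have "k \<le> lookup (c + d) i" by (simp add: lookup_add lookup_d)
      also have "\<dots> \<le> sum (lookup (c + d)) C" using finC i(1) by (intro member_le_sum) simp_all
      finally show ?thesis .
    next
      assume "k \<le> deg_on C c"
      also have "\<dots> \<le> sum (lookup (c + d)) C" unfolding deg_on_def by (intro sum_mono) (simp add: lookup_add)
      finally show ?thesis .
    qed
  qed
qed

text \<open>If \<open>P = (I^k : F)\<close> is prime and every monomial of \<open>F\<close> is divisible by \<open>x_j^k\<close> with
  \<open>x_j \<notin> P\<close>, then some minimal vertex cover inside \<open>P\<close> is light on a monomial of \<open>F\<close>:
  otherwise the \<open>k\<close>-th powers of the variables outside \<open>P\<close> would multiply \<open>F\<close> into \<open>I^k\<close>.\<close>

lemma light_min_vertex_cover_exists: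
  fixes F :: "'k::field mpoly"
  assumes N: "2 \<le> N"
    and P: "is_prime_ideal (polyring N) P" "P = {h \<in> polyring N. h * F \<in> edge_pow_ideal N k}"
    and F: "F \<in> polyring N"
    and j: "j < N" "var j \<notin> P" "\<And>c. c \<in> keys F \<Longrightarrow> k \<le> lookup c j"
  shows "\<exists>C. min_vertex_cover N C \<and> (\<forall>i\<in>C. var i \<in> P) \<and> (\<exists>c\<in>keys F. deg_on C c < k)"
proof (rule ccontr)
  assume no_light: "\<not> ?thesis"
  define A where "A = {i. i < N \<and> var i \<notin> P}"
  have heavy: "(\<exists>i\<in>C. i \<in> A) \<or> k \<le> deg_on C c"
    if C: "min_vertex_cover N C" and c: "c \<in> keys F" for C c
  proof (rule ccontr)
    assume "\<not> ?thesis"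
    moreover have "C \<subseteq> {..<N}" using C unfolding min_vertex_cover_def vertex_cover_def by blast
    ultimately have "\<forall>i\<in>C. var i \<in> P" "deg_on C c < k" by (auto simp: A_def)
    then show False using no_light C c by blast
  qed
  have powers: "(var i ^ k :: 'k mpoly) \<in> polyring N \<and> var i ^ k \<notin> P" if "i \<in> A" for i
  proof -
    have i: "i < N" "var i \<notin> P" using that unfolding A_def by auto
    have "var i ^ k \<notin> P"
    proof (cases k)
      case 0
      then show ?thesis using prime_ideal_one_notin[OF P(1)] by simp
    next
      case (Suc k')
      then show ?thesis
        using prime_ideal_power[OF P(1) is_ideal_polyring var_in_polyring[OF i(1)]] i(2) by blast
    qed
    then show ?thesis using polyring_power[OF var_in_polyring[OF i(1)]] by blast
  qed
  have A: "A \<subseteq> {..<N}" "finite A" unfolding A_def by auto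
  have "(\<Prod>i\<in>A. var i ^ k :: 'k mpoly) \<in> polyring N \<and> (\<Prod>i\<in>A. var i ^ k) \<notin> P"
    using powers by (rule prime_ideal_prod_notin[OF P(1) is_ideal_polyring one_in_polyring A(2)])
  moreover have "(\<Prod>i\<in>A. var i ^ k :: 'k mpoly) = single (\<Sum>i\<in>A. single i k) 1"
    unfolding var_power by (rule prod_single_one[OF A(2)])
  moreover have "single (\<Sum>i\<in>A. single i k) 1 * F \<in> edge_pow_ideal N k"
    by (rule mult_powers_in_edge_pow_ideal[OF N F A(1) j(1) j(3) heavy])
  ultimately show False using P(2) by auto
qed

theorem Ass_edge_pow_ideal_cases:
  assumes N: "2 \<le> N" and P: "P \<in> Ass (polyring N) (edge_pow_ideal N (Suc k))"
  shows "P = vars_ideal N {..<N} \<or> (\<exists>C. min_vertex_cover N C \<and> P = vars_ideal N C)"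
proof -
  obtain f where prime: "is_prime_ideal (polyring N) P" and f: "f \<in> polyring N"
    and Pf: "P = {g \<in> polyring N. g * f \<in> edge_pow_ideal N (Suc k)}"
    using P unfolding Ass_def by blast
  have ideal: "is_ideal (polyring N) P" using prime unfolding is_prime_ideal_def by blast
  show ?thesis
  proof (cases "\<forall>i<N. var i \<in> P")
    case True
    then show ?thesis using prime_ideal_eq_vars_ideal_all[OF prime] by blast
  next
    case False
    then obtain j where j: "j < N" "var j \<notin> P" by blast
    \<comment> \<open>Multiplying \<open>f\<close> by \<open>x_j^(k+1)\<close> keeps the prime colon ideal and makes \<open>F\<close> heavy at \<open>j\<close>.\<close>
    define F where "F = f * var j ^ Suc k"
    have vjR: "var j ^ Suc k \<in> polyring N" by (rule polyring_power[OF var_in_polyring[OF j(1)]])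
    have "var j ^ Suc k \<notin> P"
      using prime_ideal_power[OF prime is_ideal_polyring var_in_polyring[OF j(1)]] j(2) by blast
    then have PF: "P = {h \<in> polyring N. h * F \<in> edge_pow_ideal N (Suc k)}"
      unfolding F_def by (rule prime_colon_mult[OF prime Pf is_ideal_polyring vjR])
    have FR: "F \<in> polyring N" unfolding F_def by (rule polyring_mult[OF f vjR])
    have "Suc k \<le> lookup c j" if "c \<in> keys F" for c
      using that unfolding F_def var_power keys_mult_single by (auto simp: lookup_add)
    then obtain C where C: "min_vertex_cover N C" "\<forall>i\<in>C. var i \<in> P" "\<exists>c\<in>keys F. deg_on C c < Suc k"
      using light_min_vertex_cover_exists[OF N prime PF FR j] by blast
    have cover: "vertex_cover N C" using C(1) unfolding min_vertex_cover_def by blast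
    have "vars_ideal N C \<subseteq> P" using vars_ideal_subset[OF ideal] C(2) by blast
    moreover have "P \<subseteq> vars_ideal N C"
      using colon_edge_pow_subset_vars_ideal[OF cover] C(3) PF by blast
    ultimately show ?thesis using C(1) by blast
  qed
qed

lemma vars_ideal_in_Ass_edge_pow:
  assumes C: "C \<subseteq> {..<N}" and a: "keys a \<subseteq> {..<N}"
    and times_var: "\<And>i. i \<in> C \<Longrightarrow> a + single i 1 \<in> edge_pow_exps N m"
    and notin: "\<And>b. \<forall>i\<in>C. lookup b i = 0 \<Longrightarrow> b + a \<notin> edge_pow_exps N m"
  shows "vars_ideal N C \<in> Ass (polyring N) (edge_pow_ideal N m)"
proof (rule vars_ideal_in_Ass[OF finite_subset[OF C finite_lessThan] a])
  fix b
  show "b + a \<in> edge_pow_exps N m \<longleftrightarrow> (\<exists>i\<in>C. 0 < lookup b i)"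
  proof
    assume ba: "b + a \<in> edge_pow_exps N m"
    show "\<exists>i\<in>C. 0 < lookup b i"
    proof (rule ccontr)
      assume "\<not> ?thesis"
      then have "\<forall>i\<in>C. lookup b i = 0" by auto
      then show False using notin ba by blast
    qed
  next
    assume "\<exists>i\<in>C. 0 < lookup b i"
    then obtain i where i: "i \<in> C" "0 < lookup b i" by blast
    show "b + a \<in> edge_pow_exps N m"
      by (rule edge_pow_exps_mono[OF times_var[OF i(1)]])
        (use i(2) in \<open>auto simp: lookup_add lookup_single when_def\<close>)
  qed
qed

text \<open>The edges from \<open>c0\<close> and \<open>i\<close> to vertices outside the minimal cover \<open>C\<close> are used.\<close>

lemma min_vertex_cover_exp_times_var:
  assumes N: "2 \<le> N" and C: "min_vertex_cover N C" and c0: "c0 \<in> C" and i: "i \<in> C" and m: "1 \<le> m"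
  shows "(\<Sum>v\<in>{..<N} - C. single v m) + single c0 (m - 1) + single i 1 \<in> edge_pow_exps N m"
proof -
  obtain t0 c0' where t0: "t0 < N" "c0' \<notin> C" "(t0, Suc t0 mod N) \<in> {(c0, c0'), (c0', c0)}"
    using min_vertex_cover_private_edge[OF N C c0] by blast
  obtain ti i' where ti: "ti < N" "i' \<notin> C" "(ti, Suc ti mod N) \<in> {(i, i'), (i', i)}"
    using min_vertex_cover_private_edge[OF N C i] by blast
  define z where "z s = (if s = t0 then m - 1 else 0) + (if s = ti then 1 else 0)" for s
  have edge: "(if v = t then x else 0) + (if v = s then x else 0)
      = (if v = c then x else 0) + (if v = c' then x else 0)"
    if "(t, s) \<in> {(c, c'), (c', c)}" for v t s c c' x :: nat
    using that by auto
  have "sum z {..<N} = m"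
    unfolding z_def using t0(1) ti(1) m by (simp add: sum.distrib)
  moreover have "edge_deg N z v
      \<le> lookup ((\<Sum>v\<in>{..<N} - C. single v m) + single c0 (m - 1) + single i 1) v" if v: "v < N" for v
  proof -
    have "edge_deg N z v = (if v = c0 then m - 1 else 0) + (if v = c0' then m - 1 else 0)
        + ((if v = i then 1 else 0) + (if v = i' then 1 else 0))"
      unfolding z_def edge_deg_add edge_deg_single_edge[OF t0(1)] edge_deg_single_edge[OF ti(1)]
      using edge[OF t0(3)] edge[OF ti(3)] by presburger
    then show ?thesis
      using v c0 i t0(2) ti(2) m by (auto simp: lookup_add lookup_sum lookup_single when_def)
  qed
  ultimately show ?thesis unfolding edge_pow_exps_def by blast
qed

text \<open>The witness monomial has exponent \<open>m\<close> outside \<open>C\<close> and \<open>m - 1\<close> at one vertex of \<open>C\<close>,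
  so its \<open>C\<close>-degree \<open>m - 1\<close> is too small for \<open>I^m\<close>.\<close>

theorem min_vertex_cover_in_Ass_edge_pow:
  assumes N: "2 \<le> N" and C: "min_vertex_cover N C" and m: "1 \<le> m"
  shows "vars_ideal N C \<in> Ass (polyring N) (edge_pow_ideal N m)"
proof -
  have cover: "vertex_cover N C" and CN: "C \<subseteq> {..<N}"
    using C unfolding min_vertex_cover_def vertex_cover_def by auto
  have "\<forall>i<N. i \<in> C \<or> Suc i mod N \<in> C"
    using cover unfolding vertex_cover_def by blast
  moreover have "0 < N" using N by simp
  ultimately have "0 \<in> C \<or> Suc 0 mod N \<in> C" by blast
  then obtain c0 where c0: "c0 \<in> C" by blast
  define a where "a = (\<Sum>v\<in>{..<N} - C. single v m) + single c0 (m - 1)"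
  have lookup_a: "lookup a v = (if v < N \<and> v \<notin> C then m else 0) + (if v = c0 then m - 1 else 0)" for v
    unfolding a_def by (simp add: lookup_add lookup_sum lookup_single when_def sum.delta)
  have keys_a: "keys a \<subseteq> {..<N}"
    using c0 CN by (auto simp: in_keys_iff lookup_a split: if_splits)
  show ?thesis
  proof (rule vars_ideal_in_Ass_edge_pow[OF CN keys_a])
    show "a + single i 1 \<in> edge_pow_exps N m" if "i \<in> C" for i
      using min_vertex_cover_exp_times_var[OF N C c0 that m] unfolding a_def .
    fix b :: "nat \<Rightarrow>\<^sub>0 nat" assume b: "\<forall>i\<in>C. lookup b i = 0"
    have "sum (lookup (b + a)) C = (\<Sum>v\<in>C. if v = c0 then m - 1 else 0)"
      using CN b by (intro sum.cong) (auto simp: lookup_add lookup_a)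
    also have "\<dots> < m" using c0 vertex_cover_finite[OF cover] m by simp
    finally show "b + a \<notin> edge_pow_exps N m"
      using edge_pow_exps_cover_bound[OF cover] by fastforce
  qed
qed

text \<open>On the odd cycle, the edges \<open>{t, t + 1}\<close> with \<open>t\<close> even cover every vertex once, except
  \<open>0\<close>, which they cover twice; rotating moves the doubly covered vertex anywhere.\<close>

lemma odd_cycle_edge_cover:
  assumes N: "N = 2 * n + 1" and i: "i < N"
  shows "\<exists>z. sum z {..<N} = n + 1 \<and> (\<forall>v<N. edge_deg N z v = 1 + (if v = i then 1 else 0))"
proof -
  define z0 where "z0 t = (if even t then 1 else 0 :: nat)" for t :: nat
  have sum_z0: "sum z0 {..<2 * k + 1} = k + 1" for k
  proof (induction k)
    case (Suc k)
    have "{..<2 * Suc k + 1} = insert (2 * k + 2) (insert (2 * k + 1) {..<2 * k + 1})" by auto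
    then show ?case using Suc by (simp add: z0_def)
  qed (simp add: z0_def)
  have deg_z0: "edge_deg N z0 u = 1 + (if u = 0 then 1 else 0)" if u: "u < N" for u
    using u N by (cases u) (auto simp: edge_deg_def cyc_pred_def z0_def)
  define z where "z t = z0 (rot N (N - i) t)" for t
  have "sum z {..<N} = n + 1"
    using sum.reindex_bij_betw[OF bij_betw_rot[of "N - i" N], of z0] sum_z0[of n] N
    unfolding z_def by simp
  moreover have "edge_deg N z v = 1 + (if v = i then 1 else 0)" if v: "v < N" for v
  proof -
    have "edge_deg N z v = edge_deg N z0 (rot N (N - i) v)"
      unfolding z_def by (rule edge_deg_rot[OF v])
    also have "\<dots> = 1 + (if rot N (N - i) v = 0 then 1 else 0)"
      using deg_z0 rot_less v by simp
    also have "rot N (N - i) v = 0 \<longleftrightarrow> v = i"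
    proof
      assume "rot N (N - i) v = 0"
      then have "v = rot N i 0" using rot_cancel'[of i N v] i v by simp
      then show "v = i" using i by (simp add: rot_def)
    qed (simp add: rot_def i less_imp_le)
    finally show ?thesis .
  qed
  ultimately show ?thesis by blast
qed

text \<open>\<open>odd_cycle_edge_cover\<close> plus \<open>r\<close> copies of the edge \<open>{0, 1}\<close>.\<close>

lemma odd_cycle_exp_times_var:
  assumes N: "N = 2 * n + 1" and n: "1 \<le> n" and i: "i < N"
  shows "(\<Sum>v<N. single v 1) + single 0 r + single 1 r + single i 1 \<in> edge_pow_exps N (n + 1 + r)"
proof -
  have N3: "3 \<le> N" using N n by simp
  obtain zi where zi: "sum zi {..<N} = n + 1" "\<forall>v<N. edge_deg N zi v = 1 + (if v = i then 1 else 0)"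
    using odd_cycle_edge_cover[OF N i] by blast
  define z where "z t = (if t = 0 then r else 0) + zi t" for t
  have "sum z {..<N} = n + 1 + r"
    unfolding z_def using zi(1) N3 by (simp add: sum.distrib)
  moreover have "edge_deg N z v \<le> lookup ((\<Sum>v<N. single v 1) + single 0 r + single 1 r + single i 1) v"
    if v: "v < N" for v
  proof -
    have "Suc 0 mod N = 1" using N3 by simp
    then have "edge_deg N z v = (if v = 0 then r else 0) + (if v = 1 then r else 0)
        + (1 + (if v = i then 1 else 0))"
      unfolding z_def edge_deg_add using edge_deg_single_edge[of 0 N r v] zi(2) v N3 by simp
    then show ?thesis using v by (simp add: lookup_add lookup_sum lookup_single when_def)
  qed
  ultimately show ?thesis unfolding edge_pow_exps_def by blast
qed

text \<open>The witness monomial \<open>x_0^r x_1^r (x_0 x_1 \<cdots> x_(N-1))\<close>, \<open>r = m - n - 1\<close>, has degree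
  \<open>2 m - 1\<close>, too small for \<open>I^m\<close>.\<close>

theorem vars_ideal_all_in_Ass_edge_pow:
  assumes N: "N = 2 * n + 1" and n: "1 \<le> n" and m: "n + 1 \<le> m"
  shows "vars_ideal N {..<N} \<in> Ass (polyring N) (edge_pow_ideal N m)"
proof -
  have N3: "3 \<le> N" using N n by simp
  define r where "r = m - n - 1"
  define a where "a = (\<Sum>v<N. single v 1) + single 0 r + single 1 r"
  have lookup_a: "lookup a v = (if v < N then 1 else 0) + ((if v = 0 then r else 0) + (if v = 1 then r else 0))"
    for v
    unfolding a_def by (simp add: lookup_add lookup_sum lookup_single when_def sum.delta)
  have "keys a \<subseteq> {..<N}"
    using N3 by (auto simp: in_keys_iff lookup_a split: if_splits)
  moreover have "a + single i 1 \<in> edge_pow_exps N m" if "i \<in> {..<N}" for i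
    using odd_cycle_exp_times_var[OF N n, of i r] that m unfolding a_def r_def by simp
  moreover have "b + a \<notin> edge_pow_exps N m" if "\<forall>i\<in>{..<N}. lookup b i = 0" for b
  proof
    assume "b + a \<in> edge_pow_exps N m"
    then have "2 * m \<le> (\<Sum>v<N. lookup (b + a) v)"
      by (rule edge_pow_exps_degree_bound)
    also have "(\<Sum>v<N. lookup (b + a) v) = (\<Sum>v<N. 1 + ((if v = 0 then r else 0) + (if v = 1 then r else 0)))"
      using that by (intro sum.cong) (auto simp: lookup_add lookup_a)
    also have "\<dots> = N + 2 * r"
      using N3 by (simp only: sum.distrib sum.delta finite_lessThan) simp
    finally show False using N m unfolding r_def by linarith
  qed
  ultimately show ?thesis by (rule vars_ideal_in_Ass_edge_pow[OF order_refl])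
qed

lemma cycle_edge_ideal_eq:
  "cycle_edge_ideal n = ideal_gen (polyring (2 * n + 1)) (cycle_edges (2 * n + 1))"
  unfolding cycle_edge_ideal_def cycle_edges_def by simp

lemma Ass_edge_pow_ideal_Suc:
  assumes N: "2 \<le> N" and m: "1 \<le> m"
  shows "Ass (polyring N) (edge_pow_ideal N (Suc m))
    \<subseteq> Ass (polyring N) (edge_pow_ideal N m) \<union> {vars_ideal N {..<N}}"
  using Ass_edge_pow_ideal_cases[OF N] min_vertex_cover_in_Ass_edge_pow[OF N _ m] by blast

theorem corollary4p6:
  fixes n :: nat
  assumes "n \<ge> 1"
  shows "nearly_copersistent (2*n+1) (cycle_edge_ideal n :: ('k::field) mpoly set)"
proof -
  define N where "N = 2 * n + 1"
  have N: "2 \<le> N" using assms unfolding N_def by simp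
  have pow: "ideal_pow (polyring N) (cycle_edge_ideal n) m = (edge_pow_ideal N m :: 'k mpoly set)" for m
    unfolding N_def cycle_edge_ideal_eq ideal_pow_cycle_edges ..
  let ?Ass = "\<lambda>m. Ass (polyring N) (edge_pow_ideal N m) :: 'k mpoly set set"
  let ?M = "vars_ideal N {..<N} :: 'k mpoly set"
  have "?Ass (m + 1) \<subseteq> ?Ass m \<union> {?M}" if "1 \<le> m" for m
    using Ass_edge_pow_ideal_Suc[OF N that] by simp
  moreover have "?Ass (m + 1) \<subseteq> ?Ass m" if "n + 1 \<le> m" for m
    using Ass_edge_pow_ideal_Suc[OF N, of m] vars_ideal_all_in_Ass_edge_pow[OF N_def assms that] that assms
    by auto
  moreover have "monomial_prime N ?M"
    by (rule monomial_prime_vars_ideal) simp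
  ultimately show ?thesis
    unfolding nearly_copersistent_def N_def[symmetric] pow using assms by (intro exI[of _ n]) auto
qed

end
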